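(* Let $\nu$ be a probability distribution on $\mathbb{R}^k$, $\mathcal{G}$ a class of measurable maps $\mathbb{R}^k\to\mathbb{R}^d$, $\mathcal{F}$ a symmetric class of real functions and $\Omega\subseteq\mathbb{R}^d$. Assume $\mu$ and $g_\#\nu$ are supported on $\Omega$ for all $g\in\mathcal{G}$. Let $\widetilde\mu_n$ be any probability distribution supported on $\Omega$, let $Z_1,\dots,Z_m$ be points of $\mathbb{R}^k$ with $\widehat\nu_m=\frac1m\sum_j\delta_{Z_j}$, let $\epsilon_{opt}\ge 0$, and let $\widetilde g_n^*\in\mathcal{G}$ with $d_{\mathcal{F}}(\widetilde\mu_n,(\widetilde g_n^* )_\#\nu)\le\inf_{\phi\in\mathcal{G}}d_{\mathcal{F}}(\widetilde\mu_n,\phi_\#\nu)+\epsilon_{opt}$ and $\widetilde g_{n,m}^*\in\mathcal{G}$ with $d_{\mathcal{F}}(\widetilde\mu_n,(\widetilde g_{n,m}^* )_\#\widehat\nu_m)\le\inf_{\phi\in\mathcal{G}}d_{\mathcal{F}}(\widetilde\mu_n,\phi_\#\widehat\nu_m)+\epsilon_{opt}$. Then for any function class $\mathcal{H}$ defined on $\Omega$, $$d_{\mathcal{H}}(\mu,(\widetilde g_n^* )_\#\nu)\le\epsilon_{opt}+2\mathcal{E}(\mathcal{H},\mathcal{F},\Omega)+\inf_{g\in\mathcal{G}}d_{\mathcal{F}}(\widetilde\mu_n,g_\#\nu)+d_{\mathcal{F}}(\mu,\widetilde\mu_n)\land d_{\mathcal{H}}(\mu,\widetilde\mu_n),$$ $$d_{\mathcal{H}}(\mu,(\widetilde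 g_{n,m}^* )_\#\nu)\le\epsilon_{opt}+2\mathcal{E}(\mathcal{H},\mathcal{F},\Omega)+\inf_{g\in\mathcal{G}}d_{\mathcal{F}}(\widetilde\mu_n,g_\#\nu)+d_{\mathcal{F}}(\mu,\widetilde\mu_n)\land d_{\mathcal{H}}(\mu,\widetilde\mu_n)+2d_{\mathcal{F}\circ\mathcal{G}}(\nu,\widehat\nu_m).$$
   Context: $\mathcal{F}$ symmetric means $f\in\mathcal{F}\Rightarrow -f\in\mathcal{F}$. $d_{\mathcal{F}}(\mu,\gamma)=\sup_{f\in\mathcal{F}}\mathbb{E}_\mu[f]-\mathbb{E}_\gamma[f]$; $g_\#\nu(A)=\nu(g^{-1}(A))$; $\mathcal{F}\circ\mathcal{G}=\{f\circ g:f\in\mathcal{F},g\in\mathcal{G}\}$; $\mathcal{E}(\mathcal{H},\mathcal{F},\Omega)=\sup_{h\in\mathcal{H}}\inf_{f\in\mathcal{F}}\|h-f\|_{L^\infty(\Omega)}$; $a\land b=\min(a,b)$. *)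

theory Defs
  imports "HOL-Probability.Probability"
begin

definition ipm :: "('a \<Rightarrow> real) set \<Rightarrow> 'a measure \<Rightarrow> 'a measure \<Rightarrow> ereal" where
  "ipm F \<mu> \<gamma> = (SUP f\<in>F. ereal ((\<integral>x. f x \<partial>\<mu>) - (\<integral>x. f x \<partial>\<gamma>)))"

definition pushfwd :: "('a \<Rightarrow> 'b::topological_space) \<Rightarrow> 'a measure \<Rightarrow> 'b measure" where
  "pushfwd g \<nu> = distr \<nu> borel g"

definition comp_class :: "('b \<Rightarrow> real) set \<Rightarrow> ('a \<Rightarrow> 'b) set \<Rightarrow> ('a \<Rightarrow> real) set" where
  "comp_class F G = {f \<circ> g | f g. f \<in> F \<and> g \<in> G}"

text \<open>Empirical measure (1/m) sum_{j=1..m} delta_{Z j}, as a measure on the Borel sets.\<close>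
definition empirical :: "(nat \<Rightarrow> 'a::topological_space) \<Rightarrow> nat \<Rightarrow> 'a measure" where
  "empirical Z m = distr (measure_pmf (pmf_of_multiset (image_mset Z (mset_set {1..m})))) borel (\<lambda>x. x)"

definition approx_err :: "('a \<Rightarrow> real) set \<Rightarrow> ('a \<Rightarrow> real) set \<Rightarrow> 'a set \<Rightarrow> ereal" where
  "approx_err H F \<Omega> = (SUP h\<in>H. INF f\<in>F. SUP x\<in>\<Omega>. ereal \<bar>h x - f x\<bar>)"

end

theory Submission
  imports Defs
begin

text \<open>If h is within \<delta> of f uniformly on \<Omega>, the two integrals against any probability measure
  carried by \<Omega> differ by at most \<delta>; so testing with H instead of F costs at most
  2 E(H,F,\<Omega>). The triangle inequality for IPMs through the surrogate target \<mu>t, used once in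
  d_F and once in d_H, gives the first bound. For the second, replacing \<nu> by its empirical
  measure changes every d_F(\<mu>t, g_#\<nu>) by at most d_{F o G}(\<nu>, \<nu>_m), since the
  integral of f against g_#\<nu> is the integral of f o g against \<nu>; this error is paid once for
  the optimiser and once for the infimum.\<close>

lemma ipm_upper: "f \<in> F \<Longrightarrow> ereal ((\<integral>x. f x \<partial>\<mu>) - (\<integral>x. f x \<partial>\<gamma>)) \<le> ipm F \<mu> \<gamma>"
  unfolding ipm_def by (rule SUP_upper2) auto

lemma ipm_triangle: "ipm F \<mu> \<rho> \<le> ipm F \<mu> \<gamma> + ipm F \<gamma> \<rho>"
  unfolding ipm_def[of F \<mu> \<rho>]
proof (rule SUP_least)
  fix f assume f: "f \<in> F"
  have "ereal ((\<integral>x. f x \<partial>\<mu>) - (\<integral>x. f x \<partial>\<rho>))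
      = ereal ((\<integral>x. f x \<partial>\<mu>) - (\<integral>x. f x \<partial>\<gamma>)) + ereal ((\<integral>x. f x \<partial>\<gamma>) - (\<integral>x. f x \<partial>\<rho>))"
    by simp
  also have "\<dots> \<le> ipm F \<mu> \<gamma> + ipm F \<gamma> \<rho>"
    by (intro add_mono ipm_upper f)
  finally show "ereal ((\<integral>x. f x \<partial>\<mu>) - (\<integral>x. f x \<partial>\<rho>)) \<le> ipm F \<mu> \<gamma> + ipm F \<gamma> \<rho>" .
qed

lemma ipm_commute:
  assumes "\<And>f. f \<in> F \<Longrightarrow> (\<lambda>x. - f x) \<in> F"
  shows "ipm F \<gamma> \<mu> = ipm F \<mu> \<gamma>"
proof -
  have swap: "ipm F \<gamma>' \<mu>' \<le> ipm F \<mu>' \<gamma>'" for \<mu>' \<gamma>'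
    unfolding ipm_def[of F \<gamma>']
  proof (rule SUP_least)
    fix f assume "f \<in> F"
    then have "ereal ((\<integral>x. - f x \<partial>\<mu>') - (\<integral>x. - f x \<partial>\<gamma>')) \<le> ipm F \<mu>' \<gamma>'"
      by (intro ipm_upper assms)
    then show "ereal ((\<integral>x. f x \<partial>\<gamma>') - (\<integral>x. f x \<partial>\<mu>')) \<le> ipm F \<mu>' \<gamma>'"
      by simp
  qed
  show ?thesis
    by (intro antisym swap)
qed

lemma ipm_nonneg:
  assumes "F \<noteq> {}" "\<And>f. f \<in> F \<Longrightarrow> (\<lambda>x. - f x) \<in> F"
  shows "0 \<le> ipm F \<mu> \<gamma>"
proof -
  obtain f where f: "f \<in> F" using assms(1) by auto
  have "ereal ((\<integral>x. f x \<partial>\<mu>) - (\<integral>x. f x \<partial>\<gamma>)) \<le> ipm F \<mu> \<gamma>"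
    by (rule ipm_upper[OF f])
  moreover have "ereal ((\<integral>x. - f x \<partial>\<mu>) - (\<integral>x. - f x \<partial>\<gamma>)) \<le> ipm F \<mu> \<gamma>"
    by (rule ipm_upper[OF assms(2)[OF f]])
  ultimately show ?thesis
    by (cases "(\<integral>x. f x \<partial>\<mu>) \<le> (\<integral>x. f x \<partial>\<gamma>)") (auto intro: order_trans[rotated])
qed

lemma comp_class_uminus_closed:
  assumes "\<And>f. f \<in> F \<Longrightarrow> (\<lambda>x. - f x) \<in> F"
    and "k \<in> comp_class F G"
  shows "(\<lambda>x. - k x) \<in> comp_class F G"
proof -
  obtain f g where "k = f \<circ> g" "f \<in> F" "g \<in> G"
    using assms(2) unfolding comp_class_def by blast
  then have "(\<lambda>x. - k x) = (\<lambda>x. - f x) \<circ> g" "(\<lambda>x. - f x) \<in> F"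
    using assms(1) by auto
  with \<open>g \<in> G\<close> show ?thesis
    unfolding comp_class_def by blast
qed

lemma ipm_pushfwd_le_comp_class:
  fixes \<phi> :: "'a::topological_space \<Rightarrow> 'b::topological_space"
  assumes "sets \<nu> = sets borel" "sets \<nu>' = sets borel"
    and "\<phi> \<in> G" "\<phi> \<in> borel_measurable borel"
    and "\<And>f. f \<in> F \<Longrightarrow> f \<in> borel_measurable borel"
  shows "ipm F (pushfwd \<phi> \<nu>) (pushfwd \<phi> \<nu>') \<le> ipm (comp_class F G) \<nu> \<nu>'"
  unfolding ipm_def[of F]
proof (rule SUP_least)
  fix f assume f: "f \<in> F"
  have "\<phi> \<in> measurable \<nu> borel" "\<phi> \<in> measurable \<nu>' borel"
    using assms(1,2,4) measurable_cong_sets by blast+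
  then have "(\<integral>x. f x \<partial>pushfwd \<phi> \<nu>) = (\<integral>x. (f \<circ> \<phi>) x \<partial>\<nu>)"
      "(\<integral>x. f x \<partial>pushfwd \<phi> \<nu>') = (\<integral>x. (f \<circ> \<phi>) x \<partial>\<nu>')"
    unfolding pushfwd_def using integral_distr assms(5)[OF f] by auto
  moreover have "f \<circ> \<phi> \<in> comp_class F G"
    unfolding comp_class_def using f assms(3) by blast
  ultimately show "ereal ((\<integral>x. f x \<partial>pushfwd \<phi> \<nu>) - (\<integral>x. f x \<partial>pushfwd \<phi> \<nu>'))
      \<le> ipm (comp_class F G) \<nu> \<nu>'"
    using ipm_upper[of "f \<circ> \<phi>" _ \<nu> \<nu>'] by simp
qed

lemma integral_diff_le_on_support:
  fixes h f :: "'a \<Rightarrow> real"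
  assumes "prob_space M" "AE x in M. x \<in> \<Omega>" "integrable M h" "integrable M f"
    and "\<forall>y\<in>\<Omega>. \<bar>h y - f y\<bar> \<le> \<delta>"
  shows "\<bar>(\<integral>x. h x \<partial>M) - (\<integral>x. f x \<partial>M)\<bar> \<le> \<delta>"
proof -
  have "AE x in M. \<bar>h x - f x\<bar> \<le> \<delta>"
    using assms(2) by eventually_elim (use assms(5) in auto)
  then have AE_le: "AE x in M. h x - f x \<le> \<delta>" "AE x in M. f x - h x \<le> \<delta>"
    by (auto elim: AE_mp)
  have "(\<integral>x. h x - f x \<partial>M) \<le> \<delta>" "(\<integral>x. f x - h x \<partial>M) \<le> \<delta>"
    by (intro prob_space.integral_le_const[OF assms(1)] AE_le; use assms(3,4) in simp)+
  then show ?thesis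
    using assms(3,4) by simp
qed

lemma le_plus_twice_approx_err:
  fixes x :: real and c :: ereal
  assumes "h \<in> H" "\<Omega> \<noteq> {}"
    and close: "\<And>f \<delta>. f \<in> F \<Longrightarrow> \<forall>y\<in>\<Omega>. \<bar>h y - f y\<bar> \<le> \<delta> \<Longrightarrow> ereal x \<le> c + ereal (2 * \<delta>)"
  shows "ereal x \<le> c + 2 * approx_err H F \<Omega>"
proof -
  define S where "S f = (SUP y\<in>\<Omega>. ereal \<bar>h y - f y\<bar>)" for f
  have INF_S: "(INF f\<in>F. S f) \<le> approx_err H F \<Omega>"
    unfolding approx_err_def S_def by (rule SUP_upper2[OF assms(1)]) simp
  have "0 \<le> S f" for f
  proof -
    obtain y where "y \<in> \<Omega>" using assms(2) by auto
    then have "ereal \<bar>h y - f y\<bar> \<le> S f" unfolding S_def by (rule SUP_upper)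
    then show ?thesis by (rule order_trans[rotated]) simp
  qed
  then have "0 \<le> approx_err H F \<Omega>"
    using INF_S by (meson INF_greatest order_trans)
  then consider "approx_err H F \<Omega> = \<infinity>" | r where "approx_err H F \<Omega> = ereal r"
    by (cases "approx_err H F \<Omega>") auto
  then show ?thesis
  proof cases
    case 1
    then show ?thesis by (cases c) auto
  next
    case (2 r)
    show ?thesis
    proof (rule ereal_le_epsilon2)
      fix e :: real assume "0 < e"
      then have "(INF f\<in>F. S f) < ereal (r + e/2)"
        using INF_S 2 by (simp add: order_le_less_trans)
      then obtain f where f: "f \<in> F" "S f < ereal (r + e/2)"
        by (auto simp: INF_less_iff)
      have "\<forall>y\<in>\<Omega>. \<bar>h y - f y\<bar> \<le> r + e/2"
      proof
        fix y assume "y \<in> \<Omega>"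
        then have "ereal \<bar>h y - f y\<bar> \<le> S f" unfolding S_def by (rule SUP_upper)
        then have "ereal \<bar>h y - f y\<bar> < ereal (r + e/2)" using f(2) by (rule order_le_less_trans)
        then show "\<bar>h y - f y\<bar> \<le> r + e/2" by simp
      qed
      then have "ereal x \<le> c + ereal (2 * (r + e/2))"
        using close f(1) by blast
      also have "\<dots> = c + 2 * approx_err H F \<Omega> + ereal e"
        using 2 by (cases c) (auto simp: algebra_simps)
      finally show "ereal x \<le> c + 2 * approx_err H F \<Omega> + ereal e" .
    qed
  qed
qed

lemma ipm_le_ipm_plus_approx_err:
  assumes "prob_space \<mu>" "prob_space \<gamma>" "AE x in \<mu>. x \<in> \<Omega>" "AE x in \<gamma>. x \<in> \<Omega>"
    and "\<And>f. f \<in> F \<union> H \<Longrightarrow> integrable \<mu> f" "\<And>f. f \<in> F \<union> H \<Longrightarrow> integrable \<gamma> f"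
  shows "ipm H \<mu> \<gamma> \<le> ipm F \<mu> \<gamma> + 2 * approx_err H F \<Omega>"
  unfolding ipm_def[of H]
proof (rule SUP_least)
  fix h assume h: "h \<in> H"
  have "\<Omega> \<noteq> {}"
    using assms(1,3) prob_space.AE_False by fastforce
  then show "ereal ((\<integral>x. h x \<partial>\<mu>) - (\<integral>x. h x \<partial>\<gamma>)) \<le> ipm F \<mu> \<gamma> + 2 * approx_err H F \<Omega>"
  proof (rule le_plus_twice_approx_err[OF h])
    fix f \<delta> assume f: "f \<in> F" and close: "\<forall>y\<in>\<Omega>. \<bar>h y - f y\<bar> \<le> \<delta>"
    have "\<bar>(\<integral>x. h x \<partial>\<mu>) - (\<integral>x. f x \<partial>\<mu>)\<bar> \<le> \<delta>" "\<bar>(\<integral>x. h x \<partial>\<gamma>) - (\<integral>x. f x \<partial>\<gamma>)\<bar> \<le> \<delta>"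
      using assms f h close by (auto intro!: integral_diff_le_on_support)
    then have "ereal ((\<integral>x. h x \<partial>\<mu>) - (\<integral>x. h x \<partial>\<gamma>))
        \<le> ereal ((\<integral>x. f x \<partial>\<mu>) - (\<integral>x. f x \<partial>\<gamma>)) + ereal (2 * \<delta>)"
      by simp
    also have "\<dots> \<le> ipm F \<mu> \<gamma> + ereal (2 * \<delta>)"
      using f by (intro add_mono ipm_upper) auto
    finally show "ereal ((\<integral>x. h x \<partial>\<mu>) - (\<integral>x. h x \<partial>\<gamma>)) \<le> ipm F \<mu> \<gamma> + ereal (2 * \<delta>)" .
  qed
qed

lemma ipm_le_via_surrogate:
  assumes "prob_space \<mu>" "prob_space \<mu>t" "prob_space \<gamma>"
    and "AE x in \<mu>. x \<in> \<Omega>" "AE x in \<mu>t. x \<in> \<Omega>" "AE x in \<gamma>. x \<in> \<Omega>"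
    and "\<And>f. f \<in> F \<union> H \<Longrightarrow> integrable \<mu> f" "\<And>f. f \<in> F \<union> H \<Longrightarrow> integrable \<mu>t f"
      "\<And>f. f \<in> F \<union> H \<Longrightarrow> integrable \<gamma> f"
  shows "ipm H \<mu> \<gamma> \<le> min (ipm F \<mu> \<mu>t) (ipm H \<mu> \<mu>t) + ipm F \<mu>t \<gamma> + 2 * approx_err H F \<Omega>"
proof -
  let ?E = "2 * approx_err H F \<Omega>"
  have "ipm H \<mu> \<gamma> \<le> ipm F \<mu> \<gamma> + ?E"
    using assms by (intro ipm_le_ipm_plus_approx_err)
  also have "\<dots> \<le> ipm F \<mu> \<mu>t + ipm F \<mu>t \<gamma> + ?E"
    by (intro add_mono ipm_triangle order_refl)
  finally have via_F: "ipm H \<mu> \<gamma> \<le> ipm F \<mu> \<mu>t + ipm F \<mu>t \<gamma> + ?E" .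
  have "ipm H \<mu> \<gamma> \<le> ipm H \<mu> \<mu>t + ipm H \<mu>t \<gamma>"
    by (rule ipm_triangle)
  also have "\<dots> \<le> ipm H \<mu> \<mu>t + (ipm F \<mu>t \<gamma> + ?E)"
    using assms by (intro add_mono order_refl ipm_le_ipm_plus_approx_err)
  finally have via_H: "ipm H \<mu> \<gamma> \<le> ipm H \<mu> \<mu>t + ipm F \<mu>t \<gamma> + ?E"
    by (simp add: add.assoc)
  from via_F via_H show ?thesis
    by (cases "ipm F \<mu> \<mu>t \<le> ipm H \<mu> \<mu>t") (auto simp: min_def)
qed

lemma near_optimal_pushfwd_transfer:
  fixes G :: "('a::topological_space \<Rightarrow> 'b::topological_space) set"
  assumes "sets \<nu> = sets borel" "sets \<nu>' = sets borel"
    and G_meas: "\<And>g. g \<in> G \<Longrightarrow> g \<in> borel_measurable borel"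
    and F_nonempty: "F \<noteq> {}"
    and F_sym: "\<And>f. f \<in> F \<Longrightarrow> (\<lambda>x. - f x) \<in> F"
    and F_meas: "\<And>f. f \<in> F \<Longrightarrow> f \<in> borel_measurable borel"
    and g: "g \<in> G" "ipm F \<rho> (pushfwd g \<nu>') \<le> (INF \<phi>\<in>G. ipm F \<rho> (pushfwd \<phi> \<nu>')) + ereal eps"
  shows "ipm F \<rho> (pushfwd g \<nu>)
    \<le> (INF \<phi>\<in>G. ipm F \<rho> (pushfwd \<phi> \<nu>)) + ereal eps + 2 * ipm (comp_class F G) \<nu> \<nu>'"
proof -
  define D where "D = ipm (comp_class F G) \<nu> \<nu>'"
  have "comp_class F G \<noteq> {}"
    using F_nonempty g(1) unfolding comp_class_def by blast
  then have "0 \<le> D"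
    unfolding D_def by (intro ipm_nonneg comp_class_uminus_closed[OF F_sym])
  have shift: "ipm F \<rho> (pushfwd \<phi> \<nu>') \<le> ipm F \<rho> (pushfwd \<phi> \<nu>) + D" if "\<phi> \<in> G" for \<phi>
    using ipm_triangle ipm_pushfwd_le_comp_class[where F = F, OF assms(1,2) that G_meas[OF that] F_meas]
    unfolding D_def by (blast intro: order_trans add_left_mono)
  have "ipm F (pushfwd g \<nu>') (pushfwd g \<nu>) \<le> ipm (comp_class F G) \<nu>' \<nu>"
    using assms(2,1) g(1) G_meas[OF g(1)] F_meas by (rule ipm_pushfwd_le_comp_class)
  then have "ipm F (pushfwd g \<nu>') (pushfwd g \<nu>) \<le> D"
    unfolding D_def by (simp only: ipm_commute[OF comp_class_uminus_closed[OF F_sym]])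
  then have shift_g: "ipm F \<rho> (pushfwd g \<nu>) \<le> ipm F \<rho> (pushfwd g \<nu>') + D"
    using ipm_triangle by (blast intro: order_trans add_left_mono)
  have "(INF \<phi>\<in>G. ipm F \<rho> (pushfwd \<phi> \<nu>')) \<le> (INF \<phi>\<in>G. ipm F \<rho> (pushfwd \<phi> \<nu>) + D)"
    using shift by (intro INF_mono) blast
  also have "\<dots> = (INF \<phi>\<in>G. ipm F \<rho> (pushfwd \<phi> \<nu>)) + D"
    using g(1) \<open>0 \<le> D\<close> by (intro INF_ereal_add_left ipm_nonneg F_nonempty F_sym) auto
  finally have INF_shift: "(INF \<phi>\<in>G. ipm F \<rho> (pushfwd \<phi> \<nu>'))
      \<le> (INF \<phi>\<in>G. ipm F \<rho> (pushfwd \<phi> \<nu>)) + D" .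
  have "ipm F \<rho> (pushfwd g \<nu>) \<le> (INF \<phi>\<in>G. ipm F \<rho> (pushfwd \<phi> \<nu>')) + ereal eps + D"
    using shift_g g(2) by (blast intro: order_trans add_right_mono)
  also have "\<dots> \<le> (INF \<phi>\<in>G. ipm F \<rho> (pushfwd \<phi> \<nu>)) + D + ereal eps + D"
    using INF_shift by (intro add_right_mono)
  also have "\<dots> = (INF \<phi>\<in>G. ipm F \<rho> (pushfwd \<phi> \<nu>)) + ereal eps + 2 * D"
    using mult_2_ereal[of D] by (simp add: ac_simps)
  finally show ?thesis
    unfolding D_def .
qed

theorem lemma24:
  fixes \<nu> :: "'k::euclidean_space measure"
    and \<mu> \<mu>t :: "'d::euclidean_space measure"
    and G :: "('k \<Rightarrow> 'd) set"
    and F H :: "('d \<Rightarrow> real) set"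
    and \<Omega> :: "'d set"
    and Z :: "nat \<Rightarrow> 'k" and m :: nat
    and eps :: real
    and gn gnm :: "'k \<Rightarrow> 'd"
  assumes nu: "prob_space \<nu>" "sets \<nu> = sets borel"
    and mu: "prob_space \<mu>" "sets \<mu> = sets borel"
    and mut: "prob_space \<mu>t" "sets \<mu>t = sets borel"
    and G_meas: "\<And>g. g \<in> G \<Longrightarrow> g \<in> borel_measurable borel"
    and F_nonempty: "F \<noteq> {}"
    and F_sym: "\<And>f. f \<in> F \<Longrightarrow> (\<lambda>x. - f x) \<in> F"
    and FH_meas: "\<And>f. f \<in> F \<union> H \<Longrightarrow> f \<in> borel_measurable borel"
    and FH_int_mu: "\<And>f. f \<in> F \<union> H \<Longrightarrow> integrable \<mu> f"
    and FH_int_mut: "\<And>f. f \<in> F \<union> H \<Longrightarrow> integrable \<mu>t f"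
    and FH_int_push: "\<And>f g. f \<in> F \<union> H \<Longrightarrow> g \<in> G \<Longrightarrow> integrable (pushfwd g \<nu>) f"
    and mu_supp: "AE x in \<mu>. x \<in> \<Omega>"
    and push_supp: "\<And>g. g \<in> G \<Longrightarrow> AE x in pushfwd g \<nu>. x \<in> \<Omega>"
    and mut_supp: "AE x in \<mu>t. x \<in> \<Omega>"
    and m_pos: "m \<ge> 1"
    and eps_nonneg: "eps \<ge> 0"
    and gn: "gn \<in> G"
      "ipm F \<mu>t (pushfwd gn \<nu>) \<le> (INF \<phi>\<in>G. ipm F \<mu>t (pushfwd \<phi> \<nu>)) + ereal eps"
    and gnm: "gnm \<in> G"
      "ipm F \<mu>t (pushfwd gnm (empirical Z m))
         \<le> (INF \<phi>\<in>G. ipm F \<mu>t (pushfwd \<phi> (empirical Z m))) + ereal eps"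
  shows "(ipm H \<mu> (pushfwd gn \<nu>)
           \<le> ereal eps + 2 * approx_err H F \<Omega> + (INF g\<in>G. ipm F \<mu>t (pushfwd g \<nu>))
             + min (ipm F \<mu> \<mu>t) (ipm H \<mu> \<mu>t))
         \<and> (ipm H \<mu> (pushfwd gnm \<nu>)
           \<le> ereal eps + 2 * approx_err H F \<Omega> + (INF g\<in>G. ipm F \<mu>t (pushfwd g \<nu>))
             + min (ipm F \<mu> \<mu>t) (ipm H \<mu> \<mu>t)
             + 2 * ipm (comp_class F G) \<nu> (empirical Z m))"
proof -
  let ?M = "min (ipm F \<mu> \<mu>t) (ipm H \<mu> \<mu>t)" and ?E = "2 * approx_err H F \<Omega>"
    and ?I = "INF g\<in>G. ipm F \<mu>t (pushfwd g \<nu>)"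
  have via_surrogate: "ipm H \<mu> (pushfwd g \<nu>) \<le> ?M + ipm F \<mu>t (pushfwd g \<nu>) + ?E" if "g \<in> G" for g
  proof (rule ipm_le_via_surrogate[OF mu(1) mut(1) _ mu_supp mut_supp push_supp[OF that]
        FH_int_mu FH_int_mut FH_int_push[OF _ that]])
    have "g \<in> measurable \<nu> borel"
      using nu(2) G_meas[OF that] measurable_cong_sets by blast
    then show "prob_space (pushfwd g \<nu>)"
      unfolding pushfwd_def by (rule prob_space.prob_space_distr[OF nu(1)])
  qed
  have "ipm H \<mu> (pushfwd gn \<nu>) \<le> ?M + (?I + ereal eps) + ?E"
    using via_surrogate[OF gn(1)] gn(2) by (blast intro: order_trans add_mono order_refl)
  moreover have "ipm F \<mu>t (pushfwd gnm \<nu>) \<le> ?I + ereal eps + 2 * ipm (comp_class F G) \<nu> (empirical Z m)"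
    using nu(2) _ G_meas F_nonempty F_sym _ gnm
  proof (rule near_optimal_pushfwd_transfer)
    show "sets (empirical Z m) = sets borel"
      by (simp add: empirical_def)
    show "f \<in> borel_measurable borel" if "f \<in> F" for f
      using FH_meas that by blast
  qed
  then have "ipm H \<mu> (pushfwd gnm \<nu>)
      \<le> ?M + (?I + ereal eps + 2 * ipm (comp_class F G) \<nu> (empirical Z m)) + ?E"
    using via_surrogate[OF gnm(1)] by (blast intro: order_trans add_mono order_refl)
  ultimately show ?thesis
    by (simp add: ac_simps)
qed

end
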